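(* Let $X$ be a rearrangement invariant space on $(0,\infty)$ with the Fatou property such that the Cesàro space $CX$ is non-trivial. Suppose that either the ideal $X_a$ is non-trivial and the Cesàro operator $C$ is bounded on $X$, or $X_a=X$. Then the Cesàro space $C(X\cap L_\infty)$ contains a lattice isometric copy of $\ell_\infty$.
   Context: A rearrangement invariant space on $(0,\infty)$ is a Banach space $X\subset L_0(0,\infty)$ with the ideal property ($|f|\le|g|$ a.e., $g\in X$ imply $f\in X$, $\|f\|_X\le\|g\|_X$), containing an a.e. positive function, with equal norms for equimeasurable functions. Fatou property: $0\le f_n\uparrow f$ a.e., $\sup\|f_n\|_X<\infty$ imply $f\in X$ and $\|f_n\|_X\uparrow\|f\|_X$. $X_a$ is the ideal of order continuous elements. $X\cap L_\infty$ is normed by $\|f\|_{X\cap L_\infty}=\max\{\|f\|_X,\|f\|_{L_\infty}\}$. $C(f)(x)=\frac1x\int_0^x|f(t)|\,dt$; for a Banach ideal space $Y$, $CY=\{f:C(|f|)\in Y\}$ with $\|f\|_{CY}=\|C(|f|)\|_Y$. A lattice isometric copy of $\ell_\infty$ is the image of a linear isometric lattice-homomorphic embedding of $\ell_\infty$. *)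

theory Defs
  imports "HOL-Analysis.Analysis"
begin

text \<open>Functions on (0,infinity) are represented as functions real to real; only their
values on (0,infinity) matter.\<close>

definition M0 :: "real measure" where
  "M0 = restrict_space lborel {0<..}"

definition L0 :: "(real \<Rightarrow> real) set" where
  "L0 = borel_measurable M0"

definition ae_eq :: "(real \<Rightarrow> real) \<Rightarrow> (real \<Rightarrow> real) \<Rightarrow> bool" where
  "ae_eq f g \<longleftrightarrow> (AE t in M0. f t = g t)"

definition distrib_fun :: "(real \<Rightarrow> real) \<Rightarrow> real \<Rightarrow> ennreal" where
  "distrib_fun f s = emeasure lborel {t \<in> {0<..}. \<bar>f t\<bar> > s}"

definition equimeasurable :: "(real \<Rightarrow> real) \<Rightarrow> (real \<Rightarrow> real) \<Rightarrow> bool" where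
  "equimeasurable f g \<longleftrightarrow> (\<forall>s\<ge>0. distrib_fun f s = distrib_fun g s)"

text \<open>Banach ideal space (Banach function lattice) on (0,infinity), with the elements
identified modulo a.e. equality: ideal property, containing an a.e. positive function.\<close>
definition banach_ideal_space :: "(real \<Rightarrow> real) set \<Rightarrow> ((real \<Rightarrow> real) \<Rightarrow> real) \<Rightarrow> bool" where
  "banach_ideal_space S N \<longleftrightarrow>
     S \<subseteq> L0 \<and>
     (\<forall>f\<in>S. \<forall>g\<in>S. (\<lambda>t. f t + g t) \<in> S) \<and>
     (\<forall>f\<in>S. \<forall>c. (\<lambda>t. c * f t) \<in> S) \<and>
     (\<forall>f\<in>S. N f \<ge> 0) \<and>
     (\<forall>f\<in>S. N f = 0 \<longleftrightarrow> ae_eq f (\<lambda>_. 0)) \<and>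
     (\<forall>f\<in>S. \<forall>g\<in>S. N (\<lambda>t. f t + g t) \<le> N f + N g) \<and>
     (\<forall>f\<in>S. \<forall>c. N (\<lambda>t. c * f t) = \<bar>c\<bar> * N f) \<and>
     \<comment> \<open>completeness\<close>
     (\<forall>F. (\<forall>n. F n \<in> S) \<longrightarrow>
          (\<forall>e>0. \<exists>K. \<forall>m\<ge>K. \<forall>n\<ge>K. N (\<lambda>t. F m t - F n t) < e) \<longrightarrow>
          (\<exists>f\<in>S. (\<lambda>n. N (\<lambda>t. F n t - f t)) \<longlonglongrightarrow> 0)) \<and>
     \<comment> \<open>ideal property\<close>
     (\<forall>f g. f \<in> L0 \<longrightarrow> g \<in> S \<longrightarrow> (AE t in M0. \<bar>f t\<bar> \<le> \<bar>g t\<bar>) \<longrightarrow>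
          f \<in> S \<and> N f \<le> N g) \<and>
     \<comment> \<open>contains an a.e. positive function\<close>
     (\<exists>f\<in>S. AE t in M0. f t > 0)"

definition rearrangement_invariant :: "(real \<Rightarrow> real) set \<Rightarrow> ((real \<Rightarrow> real) \<Rightarrow> real) \<Rightarrow> bool" where
  "rearrangement_invariant S N \<longleftrightarrow>
     banach_ideal_space S N \<and>
     (\<forall>f g. f \<in> S \<longrightarrow> g \<in> L0 \<longrightarrow> equimeasurable f g \<longrightarrow> g \<in> S \<and> N g = N f)"

definition fatou_property :: "(real \<Rightarrow> real) set \<Rightarrow> ((real \<Rightarrow> real) \<Rightarrow> real) \<Rightarrow> bool" where
  "fatou_property S N \<longleftrightarrow>
     (\<forall>F f. (\<forall>n. F n \<in> S) \<longrightarrow> f \<in> L0 \<longrightarrow>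
        (AE t in M0. (\<forall>n. 0 \<le> F n t \<and> F n t \<le> F (Suc n) t) \<and> (\<lambda>n. F n t) \<longlonglongrightarrow> f t) \<longrightarrow>
        bdd_above (range (\<lambda>n. N (F n))) \<longrightarrow>
        f \<in> S \<and> incseq (\<lambda>n. N (F n)) \<and> (\<lambda>n. N (F n)) \<longlonglongrightarrow> N f)"

text \<open>Order continuous elements: the ideal X_a.\<close>
definition order_continuous_part :: "(real \<Rightarrow> real) set \<Rightarrow> ((real \<Rightarrow> real) \<Rightarrow> real) \<Rightarrow> (real \<Rightarrow> real) set" where
  "order_continuous_part S N =
     {f \<in> S. \<forall>F. (\<forall>n. F n \<in> L0) \<longrightarrow>
        (AE t in M0. (\<forall>n. 0 \<le> F n t \<and> F n t \<le> \<bar>f t\<bar> \<and> F (Suc n) t \<le> F n t) \<and>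
                     (\<lambda>n. F n t) \<longlonglongrightarrow> 0) \<longrightarrow>
        (\<lambda>n. N (F n)) \<longlonglongrightarrow> 0}"

definition Linf :: "(real \<Rightarrow> real) set" where
  "Linf = {f \<in> L0. \<exists>M. AE t in M0. \<bar>f t\<bar> \<le> M}"

definition linf_norm :: "(real \<Rightarrow> real) \<Rightarrow> real" where
  "linf_norm f = Inf {M. 0 \<le> M \<and> (AE t in M0. \<bar>f t\<bar> \<le> M)}"

definition inter_Linf_set :: "(real \<Rightarrow> real) set \<Rightarrow> (real \<Rightarrow> real) set" where
  "inter_Linf_set S = S \<inter> Linf"

definition inter_Linf_norm :: "((real \<Rightarrow> real) \<Rightarrow> real) \<Rightarrow> (real \<Rightarrow> real) \<Rightarrow> real" where
  "inter_Linf_norm N f = max (N f) (linf_norm f)"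

text \<open>Cesaro operator C(f)(x) = (1/x) * integral over (0,x) of |f|. It is meaningful
(i.e. C|f| is in L0) iff |f| is integrable over (0,x) for every x > 0.\<close>
definition cesaro_defined :: "(real \<Rightarrow> real) \<Rightarrow> bool" where
  "cesaro_defined f \<longleftrightarrow> (\<forall>x>0. set_integrable lborel {0<..<x} (\<lambda>t. \<bar>f t\<bar>))"

definition cesaro :: "(real \<Rightarrow> real) \<Rightarrow> real \<Rightarrow> real" where
  "cesaro f x = (set_lebesgue_integral lborel {0<..<x} (\<lambda>t. \<bar>f t\<bar>)) / x"

definition cesaro_set :: "(real \<Rightarrow> real) set \<Rightarrow> (real \<Rightarrow> real) set" where
  "cesaro_set S = {f \<in> L0. cesaro_defined f \<and> cesaro f \<in> S}"

definition cesaro_norm :: "((real \<Rightarrow> real) \<Rightarrow> real) \<Rightarrow> (real \<Rightarrow> real) \<Rightarrow> real" where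
  "cesaro_norm N f = N (cesaro f)"

definition cesaro_bounded_on :: "(real \<Rightarrow> real) set \<Rightarrow> ((real \<Rightarrow> real) \<Rightarrow> real) \<Rightarrow> bool" where
  "cesaro_bounded_on S N \<longleftrightarrow>
     (\<exists>K. \<forall>f\<in>S. cesaro_defined f \<and> cesaro f \<in> S \<and> N (cesaro f) \<le> K * N f)"

definition ell_inf :: "(nat \<Rightarrow> real) set" where
  "ell_inf = {a. bounded (range a)}"

definition ell_inf_norm :: "(nat \<Rightarrow> real) \<Rightarrow> real" where
  "ell_inf_norm a = (SUP n. \<bar>a n\<bar>)"

definition contains_lattice_isometric_ell_inf ::
    "(real \<Rightarrow> real) set \<Rightarrow> ((real \<Rightarrow> real) \<Rightarrow> real) \<Rightarrow> bool" where
  "contains_lattice_isometric_ell_inf S N \<longleftrightarrow>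
     (\<exists>T :: (nat \<Rightarrow> real) \<Rightarrow> real \<Rightarrow> real.
        (\<forall>a\<in>ell_inf. T a \<in> S) \<and>
        (\<forall>a\<in>ell_inf. \<forall>b\<in>ell_inf. ae_eq (T (\<lambda>n. a n + b n)) (\<lambda>t. T a t + T b t)) \<and>
        (\<forall>a\<in>ell_inf. \<forall>c. ae_eq (T (\<lambda>n. c * a n)) (\<lambda>t. c * T a t)) \<and>
        (\<forall>a\<in>ell_inf. \<forall>b\<in>ell_inf. ae_eq (T (\<lambda>n. max (a n) (b n))) (\<lambda>t. max (T a t) (T b t))) \<and>
        (\<forall>a\<in>ell_inf. N (T a) = ell_inf_norm a))"

end

theory Submission
  imports Defs
begin

text \<open>
Write s_d(x) = min 1 (d/x), the Cesaro transform of the indicator of (0,d). Everything reduces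
to finding d > 0 with s_d in the closed unit ball of X.

Given such d, cut (0,d] into the blocks (d/(k+2)!, d/(k+1)!] and send a bounded sequence a to
the step function whose value on block k is a_n, n = fst (prod_decode k). Its Cesaro transform
is at most \<parallel>a\<parallel> s_d, so its norm in X is at most \<parallel>a\<parallel>. Block k is k+1 times longer than
everything to its left, so the Cesaro average over it nearly reaches |a_n|; as every n labels
arbitrarily late blocks, the L-infinity norm of the transform is exactly \<parallel>a\<parallel>, and the map is a
lattice isometry.

If X_a = X, a non-zero f in CX has Cf(x) \<ge> c/x for large x, which together with rearrangement
invariance yields a majorant G \<in> X of some s_x0; the dilations s_(x0/n) decrease to 0 below G,
so by order continuity one of them is small. If C is bounded and X_a \<noteq> 0, order continuity
on shrinking subsets of a level set of an order continuous element, moved to initial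
intervals by rearrangement invariance, makes the indicators of (0,d) arbitrarily small, and then
s_d, their Cesaro transform, is small because C is bounded.
\<close>

section \<open>Functions on the positive half-line\<close>

lemma borel_measurable_imp_L0: "f \<in> borel_measurable borel \<Longrightarrow> f \<in> L0"
  unfolding L0_def M0_def by (rule measurable_restrict_space1) simp

lemma AE_M0_iff: "(AE t in M0. P t) \<longleftrightarrow> (AE t in lborel. t > 0 \<longrightarrow> P t)"
  unfolding M0_def by (subst AE_restrict_space_iff) auto

lemma AE_M0I: "(\<And>t. t > 0 \<Longrightarrow> P t) \<Longrightarrow> AE t in M0. P t"
  unfolding AE_M0_iff by (intro AE_I2) auto

lemma AE_M0_obtain_in_interval:
  assumes "AE t in M0. P t" "0 \<le> a" "a < b"
  obtains t where "a < t" "t < b" "P t"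
proof (rule ccontr)
  assume "\<not> thesis"
  have "AE t in lborel. t \<notin> {a<..<b}"
    using assms(1) unfolding AE_M0_iff
    by eventually_elim (use \<open>\<not> thesis\<close> that assms(2) in force)
  then have "{a<..<b} \<in> null_sets lborel"
    by (subst AE_iff_null_sets) auto
  then show False
    using assms(3) by (simp add: null_sets_def)
qed

lemma L0_level_set_borel:
  assumes "f \<in> L0"
  shows "{t. 0 < t \<and> t < R \<and> e < \<bar>f t\<bar>} \<in> sets borel"
proof -
  have [measurable]: "f \<in> borel_measurable M0" using assms unfolding L0_def .
  have "{t \<in> space M0. e < \<bar>f t\<bar>} \<in> sets M0" by measurable
  then have "{t \<in> {0<..}. e < \<bar>f t\<bar>} \<in> sets borel"
    unfolding M0_def by (subst (asm) sets_restrict_space_iff) (auto simp: space_restrict_space)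
  then have "{t \<in> {0<..}. e < \<bar>f t\<bar>} \<inter> {..<R} \<in> sets borel" by simp
  moreover have "{t \<in> {0<..}. e < \<bar>f t\<bar>} \<inter> {..<R} = {t. 0 < t \<and> t < R \<and> e < \<bar>f t\<bar>}" by auto
  ultimately show ?thesis by simp
qed

lemma positive_level_set_of_not_ae_zero:
  assumes "f \<in> L0" and nonzero: "\<not> ae_eq f (\<lambda>_. 0)"
  obtains e R where "0 < e" "0 < R" "0 < emeasure lborel {t. 0 < t \<and> t < R \<and> e < \<bar>f t\<bar>}"
proof (rule ccontr)
  assume "\<not> thesis"
  define L where "L m = {t. 0 < t \<and> t < real (Suc m) \<and> 1 / real (Suc m) < \<bar>f t\<bar>}" for m
  have "L m \<in> null_sets lborel" for m
  proof
    show "L m \<in> sets lborel" unfolding L_def using L0_level_set_borel[OF assms(1)] by simp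
    show "emeasure lborel (L m) = 0"
    proof (rule ccontr)
      assume "emeasure lborel (L m) \<noteq> 0"
      then show False
        using that[of "1 / real (Suc m)" "real (Suc m)"] \<open>\<not> thesis\<close>
        unfolding L_def by (simp add: zero_less_iff_neq_zero)
    qed
  qed
  then have "AE t in lborel. \<forall>m. t \<notin> L m"
    by (subst AE_all_countable) (blast intro: AE_not_in)
  then have "AE t in lborel. 0 < t \<longrightarrow> f t = 0"
  proof eventually_elim
    case (elim t)
    show ?case
    proof (rule impI, rule ccontr)
      assume "0 < t" "f t \<noteq> 0"
      obtain m :: nat where m: "max t (1 / \<bar>f t\<bar>) < real m" using reals_Archimedean2 by blast
      then have "1 / \<bar>f t\<bar> < real (Suc m)" by simp
      then have "1 < real (Suc m) * \<bar>f t\<bar>"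
        using \<open>f t \<noteq> 0\<close> by (simp add: divide_less_eq)
      then have "1 / real (Suc m) < \<bar>f t\<bar>"
        by (simp add: divide_less_eq mult.commute)
      then have "t \<in> L m" unfolding L_def using \<open>0 < t\<close> m by simp
      then show False using elim by blast
    qed
  qed
  then show False
    using nonzero unfolding ae_eq_def AE_M0_iff by simp
qed

lemma equimeasurable_indicator:
  assumes "A \<subseteq> {0<..}" "B \<subseteq> {0<..}" "emeasure lborel A = emeasure lborel B"
  shows "equimeasurable (indicator A) (indicator B)"
  unfolding equimeasurable_def distrib_fun_def
proof (intro allI impI)
  fix s :: real assume "s \<ge> 0"
  then have "{t \<in> {0<..}. s < \<bar>indicator A t :: real\<bar>} = (if s < 1 then A else {})"
    "{t \<in> {0<..}. s < \<bar>indicator B t :: real\<bar>} = (if s < 1 then B else {})"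
    using assms by (auto simp: indicator_def)
  then show "emeasure lborel {t \<in> {0<..}. s < \<bar>indicator A t :: real\<bar>} =
        emeasure lborel {t \<in> {0<..}. s < \<bar>indicator B t :: real\<bar>}"
    using assms(3) by simp
qed

lemma fmeasurable_bounded_borel: "A \<in> sets borel \<Longrightarrow> bounded A \<Longrightarrow> A \<in> fmeasurable lborel"
  by (intro fmeasurableI emeasure_bounded_finite) auto

lemma measure_Int_lessThan_increment:
  fixes E :: "real set"
  assumes "E \<in> sets borel" "bounded E" "r \<le> r'"
  shows "measure lborel (E \<inter> {..<r}) \<le> measure lborel (E \<inter> {..<r'})"
    and "measure lborel (E \<inter> {..<r'}) \<le> measure lborel (E \<inter> {..<r}) + (r' - r)"
proof -
  have fin: "E \<inter> S \<in> fmeasurable lborel" if "S \<in> sets borel" for S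
    using assms(1,2) that by (intro fmeasurable_bounded_borel bounded_Int) auto
  have "E \<inter> {..<r'} = (E \<inter> {..<r}) \<union> (E \<inter> {r..<r'})"
    using assms(3) by auto
  moreover have "E \<inter> {..<r} \<in> fmeasurable lborel" "E \<inter> {r..<r'} \<in> fmeasurable lborel"
    by (simp_all add: fin)
  moreover have "measure lborel ((E \<inter> {..<r}) \<union> (E \<inter> {r..<r'})) =
      measure lborel (E \<inter> {..<r}) + measure lborel (E \<inter> {r..<r'})"
    using calculation(2,3) by (intro measure_Union) (auto dest: fmeasurableD2)
  ultimately have split:
    "measure lborel (E \<inter> {..<r'}) = measure lborel (E \<inter> {..<r}) + measure lborel (E \<inter> {r..<r'})"
    by simp
  have "measure lborel (E \<inter> {r..<r'}) \<le> measure lborel {r..<r'}"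
    using fin[of "{r..<r'}"] fmeasurable_bounded_borel[of "{r..<r'}"]
    by (intro measure_mono_fmeasurable) auto
  then show "measure lborel (E \<inter> {..<r'}) \<le> measure lborel (E \<inter> {..<r}) + (r' - r)"
    using split assms(3) by simp
  show "measure lborel (E \<inter> {..<r}) \<le> measure lborel (E \<inter> {..<r'})"
    using split by simp
qed

lemma measure_Int_lessThan_attains:
  fixes E :: "real set"
  assumes "E \<in> sets borel" "bounded E" "0 \<le> y" "y \<le> measure lborel E"
  obtains r where "measure lborel (E \<inter> {..<r}) = y"
proof -
  define m where "m r = measure lborel (E \<inter> {..<r})" for r
  note increment = measure_Int_lessThan_increment[OF assms(1,2)]
  obtain a where a: "\<And>t. t \<in> E \<Longrightarrow> \<bar>t\<bar> \<le> a"
    using assms(2) unfolding bounded_real by blast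
  have "E \<inter> {..<- \<bar>a\<bar> - 1} = {}" "E \<inter> {..<\<bar>a\<bar> + 1} = E"
    using a by force+
  then have "m (- \<bar>a\<bar> - 1) = 0" "m (\<bar>a\<bar> + 1) = measure lborel E"
    unfolding m_def by simp_all
  moreover have "continuous_on UNIV m"
  proof (rule lipschitz_on_continuous_on[of 1], rule lipschitz_onI)
    fix r r' :: real
    show "dist (m r) (m r') \<le> 1 * dist r r'"
      using increment[of r r'] increment[of r' r] unfolding m_def dist_real_def
      by (cases "r \<le> r'") auto
  qed simp
  ultimately obtain r where "m r = y"
    using IVT'[of m "- \<bar>a\<bar> - 1" y "\<bar>a\<bar> + 1"] continuous_on_subset[of UNIV m] assms(3,4)
    by auto
  then show ?thesis
    using that unfolding m_def by blast
qed

lemma shrinking_subsets_of_positive_measure: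
  fixes E :: "real set"
  assumes "E \<in> sets borel" "bounded E" "0 < measure lborel E"
  obtains S where "\<And>n. S n \<in> sets borel" "\<And>n. S n \<subseteq> E" "\<And>n. S (Suc n) \<subseteq> S n"
    "\<And>n. 0 < measure lborel (S n)" "(\<Inter>n. S n) \<in> null_sets lborel"
proof -
  define \<mu> where "\<mu> = measure lborel E"
  have "\<exists>r. measure lborel (E \<inter> {..<r}) = \<mu> / real (Suc (Suc n))" for n
  proof -
    have "0 \<le> \<mu> / real (Suc (Suc n))" "\<mu> / real (Suc (Suc n)) \<le> \<mu>"
      using assms(3) by (simp_all add: \<mu>_def divide_le_eq)
    then show ?thesis
      using measure_Int_lessThan_attains[OF assms(1,2)] unfolding \<mu>_def by blast
  qed
  then obtain r where r: "\<And>n. measure lborel (E \<inter> {..<r n}) = \<mu> / real (Suc (Suc n))"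
    by metis
  define S where "S n = E \<inter> {..<r n}" for n
  have r_decreasing: "r (Suc n) < r n" for n
  proof (rule ccontr)
    assume "\<not> r (Suc n) < r n"
    then have "measure lborel (E \<inter> {..<r n}) \<le> measure lborel (E \<inter> {..<r (Suc n)})"
      by (intro measure_Int_lessThan_increment(1)[OF assms(1,2)]) simp
    then show False
      using r[of n] r[of "Suc n"] assms(3) by (simp add: \<mu>_def divide_le_eq field_simps)
  qed
  have S_decreasing: "S (Suc n) \<subseteq> S n" for n
    unfolding S_def using r_decreasing[of n] by auto
  have S_measure: "measure lborel (S n) = \<mu> / real (Suc (Suc n))" for n
    using r[of n] unfolding S_def .
  have S_sets: "S n \<in> sets borel" for n
    unfolding S_def using assms(1) by simp
  have S_fin: "S n \<in> fmeasurable lborel" for n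
    unfolding S_def using assms(1,2) by (intro fmeasurable_bounded_borel bounded_Int) auto
  have "(\<lambda>n. measure lborel (S n)) \<longlonglongrightarrow> measure lborel (\<Inter>n. S n)"
    using S_sets fmeasurableD2[OF S_fin] by (intro Lim_measure_decseq decseq_SucI S_decreasing) auto
  moreover have "(\<lambda>n. measure lborel (S n)) \<longlonglongrightarrow> 0"
    unfolding S_measure by (intro LIMSEQ_Suc lim_const_over_n)
  ultimately have "measure lborel (\<Inter>n. S n) = 0"
    using LIMSEQ_unique by blast
  moreover have "(\<Inter>n. S n) \<in> fmeasurable lborel"
    using S_sets by (intro fmeasurableI2[OF S_fin[of 0]]) auto
  ultimately have "(\<Inter>n. S n) \<in> null_sets lborel"
    by (auto simp: emeasure_eq_measure2)
  moreover have "0 < measure lborel (S n)" for n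
    unfolding S_measure using assms(3) by (simp add: \<mu>_def)
  ultimately show ?thesis
    using that[of S] S_decreasing assms(1) by (auto simp: S_def)
qed

lemma linf_norm_eqI:
  assumes "0 \<le> s" "\<And>t. 0 < t \<Longrightarrow> \<bar>f t\<bar> \<le> s"
    and "\<And>M. M < s \<Longrightarrow> \<exists>a b. 0 \<le> a \<and> a < b \<and> (\<forall>t\<in>{a<..<b}. M < \<bar>f t\<bar>)"
  shows "linf_norm f = s"
  unfolding linf_norm_def
proof (rule cInf_eq_minimum)
  show "s \<in> {M. 0 \<le> M \<and> (AE t in M0. \<bar>f t\<bar> \<le> M)}"
    using assms(1,2) by (auto intro: AE_M0I)
next
  fix M assume "M \<in> {M. 0 \<le> M \<and> (AE t in M0. \<bar>f t\<bar> \<le> M)}"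
  then have AE: "AE t in M0. \<bar>f t\<bar> \<le> M" by blast
  show "s \<le> M"
  proof (rule ccontr)
    assume "\<not> s \<le> M"
    then obtain a b where "0 \<le> a" "a < b" and above: "\<forall>t\<in>{a<..<b}. M < \<bar>f t\<bar>"
      using assms(3) by force
    obtain t where "a < t" "t < b" "\<bar>f t\<bar> \<le> M"
      by (rule AE_M0_obtain_in_interval[OF AE \<open>0 \<le> a\<close> \<open>a < b\<close>])
    then show False using above by force
  qed
qed

lemma banach_ideal_space_subset_L0: "banach_ideal_space S N \<Longrightarrow> S \<subseteq> L0"
  unfolding banach_ideal_space_def by blast

lemma banach_ideal_space_add:
  "banach_ideal_space S N \<Longrightarrow> f \<in> S \<Longrightarrow> g \<in> S \<Longrightarrow> (\<lambda>t. f t + g t) \<in> S"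
  unfolding banach_ideal_space_def by blast

lemma banach_ideal_space_mult:
  "banach_ideal_space S N \<Longrightarrow> f \<in> S \<Longrightarrow> (\<lambda>t. c * f t) \<in> S"
  unfolding banach_ideal_space_def by blast

lemma banach_ideal_space_norm_mult:
  "banach_ideal_space S N \<Longrightarrow> f \<in> S \<Longrightarrow> N (\<lambda>t. c * f t) = \<bar>c\<bar> * N f"
  unfolding banach_ideal_space_def by blast

lemma banach_ideal_space_norm_nonneg: "banach_ideal_space S N \<Longrightarrow> f \<in> S \<Longrightarrow> 0 \<le> N f"
  unfolding banach_ideal_space_def by blast

lemma banach_ideal_space_dominated:
  assumes "banach_ideal_space S N" "f \<in> L0" "g \<in> S" "\<And>t. t > 0 \<Longrightarrow> \<bar>f t\<bar> \<le> \<bar>g t\<bar>"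
  shows "f \<in> S" "N f \<le> N g"
  using assms AE_M0I[of "\<lambda>t. \<bar>f t\<bar> \<le> \<bar>g t\<bar>"] unfolding banach_ideal_space_def by blast+

lemma rearrangement_invariant_banach_ideal_space:
  "rearrangement_invariant S N \<Longrightarrow> banach_ideal_space S N"
  unfolding rearrangement_invariant_def by blast

lemma rearrangement_invariant_indicator:
  assumes "rearrangement_invariant S N" "indicator A \<in> S" "B \<in> sets borel"
    and "A \<subseteq> {0<..}" "B \<subseteq> {0<..}" "emeasure lborel A = emeasure lborel B"
  shows "indicator B \<in> S" "N (indicator B) = N (indicator A)"
proof -
  have "indicator B \<in> L0"
    using assms(3) by (intro borel_measurable_imp_L0 borel_measurable_indicator)
  then show "indicator B \<in> S" "N (indicator B) = N (indicator A)"
    using assms equimeasurable_indicator unfolding rearrangement_invariant_def by blast+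
qed

lemma order_continuous_partD:
  assumes "f \<in> order_continuous_part S N" "\<And>n. F n \<in> L0"
    and "AE t in M0. (\<forall>n. 0 \<le> F n t \<and> F n t \<le> \<bar>f t\<bar> \<and> F (Suc n) t \<le> F n t) \<and> (\<lambda>n. F n t) \<longlonglongrightarrow> 0"
  shows "(\<lambda>n. N (F n)) \<longlonglongrightarrow> 0"
  using assms unfolding order_continuous_part_def by blast

lemma order_continuous_shrinking_indicators:
  assumes X: "banach_ideal_space X NX" and f: "f \<in> order_continuous_part X NX" and "0 < e"
    and S_sets: "\<And>n. S n \<in> sets borel" and S_level: "\<And>n. S n \<subseteq> {t. e < \<bar>f t\<bar>}"
    and S_decreasing: "\<And>n. S (Suc n) \<subseteq> S n" and S_null: "(\<Inter>n. S n) \<in> null_sets lborel"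
  shows "indicator (S n) \<in> X" and "(\<lambda>n. NX (indicator (S n))) \<longlonglongrightarrow> 0"
proof -
  have f_X: "f \<in> X" using f unfolding order_continuous_part_def by blast
  define F where "F n t = e * indicator (S n) t" for n t
  have F_L0: "F n \<in> L0" for n
    unfolding F_def using borel_measurable_indicator[OF S_sets[of n]]
    by (intro borel_measurable_imp_L0 borel_measurable_times borel_measurable_const)
  have F_nonneg: "0 \<le> F n t" and F_le: "\<bar>F n t\<bar> \<le> \<bar>f t\<bar>" for n t
    unfolding F_def using S_level[of n] \<open>0 < e\<close> by (auto simp: indicator_def)
  have F_X: "F n \<in> X" for n
    by (rule banach_ideal_space_dominated(1)[OF X F_L0 f_X F_le])
  have "(\<lambda>n. NX (F n)) \<longlonglongrightarrow> 0"
  proof (rule order_continuous_partD[OF f F_L0])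
    have "AE t in lborel. t \<notin> (\<Inter>n. S n)" by (rule AE_not_in[OF S_null])
    then show "AE t in M0. (\<forall>n. 0 \<le> F n t \<and> F n t \<le> \<bar>f t\<bar> \<and> F (Suc n) t \<le> F n t) \<and>
        (\<lambda>n. F n t) \<longlonglongrightarrow> 0"
      unfolding AE_M0_iff
    proof eventually_elim
      case (elim t)
      then obtain n0 where "t \<notin> S n0" by blast
      moreover have "decseq S" using S_decreasing by (rule decseq_SucI)
      ultimately have "\<forall>n\<ge>n0. F n t = 0" unfolding F_def decseq_def by (auto simp: indicator_def)
      then have "(\<lambda>n. F n t) \<longlonglongrightarrow> 0"
        by (intro tendsto_eventually) (auto simp: eventually_sequentially)
      moreover have "F (Suc n) t \<le> F n t" for n
        unfolding F_def using S_decreasing[of n] \<open>0 < e\<close> by (auto simp: indicator_def)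
      ultimately show ?case using F_nonneg F_le[of _ t] by (auto intro: order_trans[OF abs_ge_self])
    qed
  qed
  moreover have indicator_eq: "indicator (S n) = (\<lambda>t. (1 / e) * F n t)" for n
    unfolding F_def using \<open>0 < e\<close> by (auto simp: fun_eq_iff)
  moreover have "NX (indicator (S n)) = NX (F n) / e" for n
    unfolding indicator_eq banach_ideal_space_norm_mult[OF X F_X] using \<open>0 < e\<close> by simp
  ultimately show "(\<lambda>n. NX (indicator (S n))) \<longlonglongrightarrow> 0"
    by (simp add: tendsto_divide_zero)
  show "indicator (S n) \<in> X"
    unfolding indicator_eq by (rule banach_ideal_space_mult[OF X F_X])
qed

section \<open>The Cesaro operator\<close>

lemma cesaro_measurable:
  assumes [measurable]: "f \<in> borel_measurable borel"
  shows "cesaro f \<in> borel_measurable borel"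
proof -
  have "(\<lambda>x. integral\<^sup>L lborel (\<lambda>t. indicator {0<..<x} t *\<^sub>R \<bar>f t\<bar>)) \<in> borel_measurable borel"
  proof (rule lborel.borel_measurable_lebesgue_integral)
    have "(\<lambda>(x, t). indicator {0<..<x} t *\<^sub>R \<bar>f t\<bar>) =
        (\<lambda>p::real \<times> real. (if 0 < snd p \<and> snd p < fst p then 1 else 0) * \<bar>f (snd p)\<bar>)"
      by (auto simp: indicator_def fun_eq_iff)
    then show "(\<lambda>(x, t). indicator {0<..<x} t *\<^sub>R \<bar>f t\<bar>) \<in> borel_measurable (borel \<Otimes>\<^sub>M lborel)"
      by simp
  qed
  then show ?thesis
    unfolding cesaro_def[abs_def] set_lebesgue_integral_def by measurable
qed

lemma integrable_const_indicator:
  "A \<in> sets borel \<Longrightarrow> emeasure lborel A < \<infinity> \<Longrightarrow> integrable lborel (\<lambda>t. c * indicator A t :: real)"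
  by (intro integrable_mult_right integrable_real_indicator) auto

lemma integral_const_indicator:
  "A \<in> sets borel \<Longrightarrow> (LINT t|lborel. c * indicator A t :: real) = c * measure lborel A"
  by (simp add: integral_indicator)

lemma integrable_bounded_on_interval:
  fixes f :: "real \<Rightarrow> real"
  assumes [measurable]: "f \<in> borel_measurable borel" and "\<And>t. \<bar>f t\<bar> \<le> B" "0 \<le> x"
  shows "integrable lborel (\<lambda>t. indicator {0<..<x} t * \<bar>f t\<bar>)"
proof (rule Bochner_Integration.integrable_bound[OF integrable_const_indicator[of "{0<..<x}" B]])
  show "AE t in lborel. norm (indicator {0<..<x} t * \<bar>f t\<bar>) \<le> norm (B * indicator {0<..<x} t)"
    using assms(2) by (intro AE_I2) (auto simp: indicator_def intro: order_trans[OF _ abs_ge_self])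
qed (use assms(3) in auto)

lemma cesaro_defined_bounded:
  assumes "f \<in> borel_measurable borel" "\<And>t. \<bar>f t\<bar> \<le> B"
  shows "cesaro_defined f"
  unfolding cesaro_defined_def set_integrable_def
  using integrable_bounded_on_interval[OF assms] by simp

lemma cesaro_nonneg: "0 \<le> cesaro f x"
proof (cases "x > 0")
  case True
  have "0 \<le> set_lebesgue_integral lborel {0<..<x} (\<lambda>t. \<bar>f t\<bar>)"
    unfolding set_lebesgue_integral_def by (intro integral_nonneg_AE) auto
  then show ?thesis unfolding cesaro_def using True by simp
qed (simp add: cesaro_def set_lebesgue_integral_def)

lemma cesaro_le_of_bounded_support:
  assumes [measurable]: "f \<in> borel_measurable borel"
    and bound: "\<And>t. \<bar>f t\<bar> \<le> s * indicator {0<..d} t" and "0 < x" "0 < d"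
  shows "cesaro f x \<le> s * min 1 (d / x)"
proof -
  have s_nonneg: "0 \<le> s" using bound[of d] \<open>0 < d\<close> by simp
  then have f_le: "\<bar>f t\<bar> \<le> s" for t
    using bound[of t] by (cases "0 < t \<and> t \<le> d") (auto simp: indicator_def)
  have f_zero: "f t = 0" if "\<not> (0 < t \<and> t \<le> d)" for t
    using bound[of t] that by (simp add: indicator_def)
  let ?g = "\<lambda>t. indicator {0<..<x} t * \<bar>f t\<bar>"
  have int_g: "integrable lborel ?g"
    using integrable_bounded_on_interval[OF assms(1) f_le] \<open>0 < x\<close> by simp
  have "integral\<^sup>L lborel ?g \<le> (LINT t|lborel. s * indicator {0<..<x} t)"
    by (rule integral_mono[OF int_g integrable_const_indicator]) (use f_le \<open>0 < x\<close> in \<open>auto simp: indicator_def\<close>)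
  then have le_x: "integral\<^sup>L lborel ?g \<le> s * x"
    using \<open>0 < x\<close> by (simp add: integral_const_indicator)
  have "integral\<^sup>L lborel ?g \<le> (LINT t|lborel. s * indicator {0<..d} t)"
    by (rule integral_mono[OF int_g integrable_const_indicator])
       (use f_le f_zero s_nonneg \<open>0 < d\<close> in \<open>auto simp: indicator_def\<close>)
  then have le_d: "integral\<^sup>L lborel ?g \<le> s * d"
    using \<open>0 < d\<close> by (simp add: integral_const_indicator)
  have "integral\<^sup>L lborel ?g / x \<le> s * min 1 (d / x)"
  proof (cases "x \<le> d")
    case True
    then show ?thesis using le_x \<open>0 < x\<close> by (simp add: divide_le_eq le_divide_eq)
  next
    case False
    then show ?thesis using le_d \<open>0 < x\<close> by (simp add: divide_le_eq min_def)
  qed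
  then show ?thesis
    unfolding cesaro_def set_lebesgue_integral_def by simp
qed

lemma cesaro_ge_of_lower_bound:
  assumes [measurable]: "f \<in> borel_measurable borel" and "\<And>t. \<bar>f t\<bar> \<le> B"
    and "0 < x" "0 \<le> y" "y \<le> z" "z \<le> x" and lower: "\<And>t. y < t \<Longrightarrow> t < z \<Longrightarrow> c \<le> \<bar>f t\<bar>"
  shows "c * (z - y) / x \<le> cesaro f x"
proof -
  let ?g = "\<lambda>t. indicator {0<..<x} t * \<bar>f t\<bar>"
  have "c * (z - y) = (LINT t|lborel. c * indicator {y<..<z} t)"
    using assms(5) by (simp add: integral_const_indicator)
  also have "\<dots> \<le> integral\<^sup>L lborel ?g"
    by (rule integral_mono[OF integrable_const_indicator integrable_bounded_on_interval[OF assms(1,2)]])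
       (use lower assms(3-6) in \<open>auto simp: indicator_def\<close>)
  finally show ?thesis
    using \<open>0 < x\<close> unfolding cesaro_def set_lebesgue_integral_def by (simp add: divide_right_mono)
qed

lemma min_le_cesaro_indicator:
  assumes "0 < d" "0 < x"
  shows "min 1 (d / x) \<le> cesaro (indicator {0<..<d}) x"
proof -
  have "1 * (min x d - 0) / x \<le> cesaro (indicator {0<..<d}) x"
    by (rule cesaro_ge_of_lower_bound[where B = 1]) (use assms in \<open>auto simp: indicator_def\<close>)
  moreover have "min 1 (d / x) = min x d / x"
    using assms by (simp add: min_def field_simps)
  ultimately show ?thesis
    by simp
qed

lemma positive_initial_integral_of_not_ae_zero:
  assumes defined: "cesaro_defined f" and nonzero: "\<not> ae_eq f (\<lambda>_. 0)"
  obtains x0 where "0 < x0" "0 < set_lebesgue_integral lborel {0<..<x0} (\<lambda>t. \<bar>f t\<bar>)"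
proof (rule ccontr)
  assume "\<not> thesis"
  have "0 \<le> set_lebesgue_integral lborel {0<..<x} (\<lambda>t. \<bar>f t\<bar>)" for x
    unfolding set_lebesgue_integral_def by (intro integral_nonneg_AE) auto
  with that \<open>\<not> thesis\<close> have zero: "set_lebesgue_integral lborel {0<..<x} (\<lambda>t. \<bar>f t\<bar>) = 0"
    if "0 < x" for x
    using that by (meson not_less order.antisym)
  have "AE t in lborel. indicator {0<..<real (Suc m)} t * \<bar>f t\<bar> = 0" for m
  proof -
    have integrable: "integrable lborel (\<lambda>t. indicator {0<..<real (Suc m)} t * \<bar>f t\<bar>)"
      using defined unfolding cesaro_defined_def set_integrable_def by simp
    have "(LINT t|lborel. indicator {0<..<real (Suc m)} t * \<bar>f t\<bar>) = 0"
      using zero[of "real (Suc m)"] unfolding set_lebesgue_integral_def by simp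
    then show ?thesis
      using integral_nonneg_eq_0_iff_AE[OF integrable] by auto
  qed
  then have "AE t in lborel. \<forall>m. indicator {0<..<real (Suc m)} t * \<bar>f t\<bar> = 0"
    by (subst AE_all_countable) blast
  then have "AE t in lborel. 0 < t \<longrightarrow> f t = 0"
  proof eventually_elim
    case (elim t)
    show ?case
    proof
      assume "0 < t"
      moreover obtain m :: nat where "t < real m" using reals_Archimedean2 by blast
      ultimately show "f t = 0" using elim[rule_format, of m] by simp
    qed
  qed
  then show False
    using nonzero unfolding ae_eq_def AE_M0_iff by simp
qed

lemma cesaro_ge_of_initial_integral:
  assumes "cesaro_defined f" "0 < x0" "x0 \<le> x"
  shows "set_lebesgue_integral lborel {0<..<x0} (\<lambda>t. \<bar>f t\<bar>) / x \<le> cesaro f x"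
proof -
  have "set_lebesgue_integral lborel {0<..<x0} (\<lambda>t. \<bar>f t\<bar>) \<le>
      set_lebesgue_integral lborel {0<..<x} (\<lambda>t. \<bar>f t\<bar>)"
    unfolding set_lebesgue_integral_def
    by (rule integral_mono)
       (use assms in \<open>auto simp: cesaro_defined_def set_integrable_def indicator_def\<close>)
  then show ?thesis
    unfolding cesaro_def using assms(2,3) by (simp add: divide_right_mono)
qed

lemma cesaro_tail_lower_bound:
  assumes "cesaro_defined f" "\<not> ae_eq f (\<lambda>_. 0)"
  obtains x0 c where "0 < x0" "0 < c" "\<And>x. x0 \<le> x \<Longrightarrow> c / x \<le> cesaro f x"
proof -
  obtain x0 where "0 < x0" "0 < set_lebesgue_integral lborel {0<..<x0} (\<lambda>t. \<bar>f t\<bar>)"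
    by (rule positive_initial_integral_of_not_ae_zero[OF assms])
  then show ?thesis
    using that cesaro_ge_of_initial_integral[OF assms(1) \<open>0 < x0\<close>] by blast
qed

section \<open>The embedding of bounded sequences\<close>

definition knot :: "real \<Rightarrow> nat \<Rightarrow> real" where
  "knot d k = d / fact (Suc k)"

definition block :: "real \<Rightarrow> nat \<Rightarrow> real set" where
  "block d k = {knot d (Suc k)<..knot d k}"

definition ell_inf_embedding :: "real \<Rightarrow> (nat \<Rightarrow> real) \<Rightarrow> real \<Rightarrow> real" where
  "ell_inf_embedding d a t = (\<Sum>k. a (fst (prod_decode k)) * indicator (block d k) t)"

lemma knot_pos: "0 < d \<Longrightarrow> 0 < knot d k"
  unfolding knot_def by simp

lemma knot_le: "0 < d \<Longrightarrow> knot d k \<le> d"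
  unfolding knot_def by (simp add: divide_le_eq del: fact_Suc)

lemma knot_Suc: "knot d (Suc k) = knot d k / (real k + 2)"
  unfolding knot_def by (simp add: field_simps)

lemma knot_antimono: "0 < d \<Longrightarrow> j \<le> k \<Longrightarrow> knot d k \<le> knot d j"
  unfolding knot_def by (intro divide_left_mono) (auto simp: fact_mono simp del: fact_Suc)

lemma block_disjoint:
  assumes "0 < d" "t \<in> block d j" "t \<in> block d k"
  shows "j = k"
proof (rule linorder_cases)
  assume "j < k"
  then have "knot d k \<le> knot d (Suc j)" using knot_antimono[OF assms(1)] by simp
  then show ?thesis using assms(2,3) unfolding block_def by auto
next
  assume "k < j"
  then have "knot d j \<le> knot d (Suc k)" using knot_antimono[OF assms(1)] by simp
  then show ?thesis using assms(2,3) unfolding block_def by auto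
qed

lemma block_subset: "0 < d \<Longrightarrow> block d k \<subseteq> {0<..d}"
  unfolding block_def using knot_pos[of d "Suc k"] knot_le[of d k] by auto

lemma ell_inf_embedding_on_block:
  assumes "0 < d" "t \<in> block d k"
  shows "ell_inf_embedding d a t = a (fst (prod_decode k))"
proof -
  have "(\<Sum>j. a (fst (prod_decode j)) * indicator (block d j) t) =
      (\<Sum>j\<in>{k}. a (fst (prod_decode j)) * indicator (block d j) t)"
    by (rule suminf_finite) (use block_disjoint[OF assms(1) _ assms(2)] in \<open>auto simp: indicator_def\<close>)
  then show ?thesis
    unfolding ell_inf_embedding_def using assms by simp
qed

lemma ell_inf_embedding_off_blocks: "(\<And>k. t \<notin> block d k) \<Longrightarrow> ell_inf_embedding d a t = 0"
  unfolding ell_inf_embedding_def by simp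

lemma ell_inf_embedding_pointwise:
  assumes "0 < d" "\<phi> 0 0 = 0"
  shows "ell_inf_embedding d (\<lambda>n. \<phi> (a n) (b n)) t = \<phi> (ell_inf_embedding d a t) (ell_inf_embedding d b t)"
proof (cases "\<exists>k. t \<in> block d k")
  case True
  then show ?thesis using ell_inf_embedding_on_block[OF assms(1)] by auto
next
  case False
  then show ?thesis using ell_inf_embedding_off_blocks assms(2) by metis
qed

lemma ell_inf_embedding_measurable: "ell_inf_embedding d a \<in> borel_measurable borel"
  unfolding ell_inf_embedding_def block_def by measurable

lemma ell_inf_embedding_bound:
  assumes "0 < d" "\<And>n. \<bar>a n\<bar> \<le> s"
  shows "\<bar>ell_inf_embedding d a t\<bar> \<le> s * indicator {0<..d} t"
proof (cases "\<exists>k. t \<in> block d k")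
  case True
  then obtain k where "t \<in> block d k" by blast
  moreover have "t \<in> {0<..d}" using block_subset[OF assms(1)] \<open>t \<in> block d k\<close> by blast
  ultimately show ?thesis
    using ell_inf_embedding_on_block[OF assms(1)] assms(2) by simp
next
  case False
  then show ?thesis
    using ell_inf_embedding_off_blocks assms(2)[of 0] by (simp add: indicator_def)
qed

lemma ell_inf_bdd_above: "a \<in> ell_inf \<Longrightarrow> bdd_above (range (\<lambda>n. \<bar>a n\<bar>))"
  unfolding ell_inf_def bounded_real bdd_above_def by auto

lemma abs_le_ell_inf_norm: "a \<in> ell_inf \<Longrightarrow> \<bar>a n\<bar> \<le> ell_inf_norm a"
  unfolding ell_inf_norm_def by (rule cSUP_upper[OF _ ell_inf_bdd_above]) auto

lemma ell_inf_norm_nonneg: "a \<in> ell_inf \<Longrightarrow> 0 \<le> ell_inf_norm a"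
  using abs_le_ell_inf_norm[of a 0] by linarith

lemma abs_ell_inf_embedding_le:
  assumes "0 < d" "a \<in> ell_inf"
  shows "\<bar>ell_inf_embedding d a t\<bar> \<le> ell_inf_norm a"
  using ell_inf_embedding_bound[of d a "ell_inf_norm a" t, OF assms(1) abs_le_ell_inf_norm[OF assms(2)]]
    ell_inf_norm_nonneg[OF assms(2)]
  by (cases "0 < t \<and> t \<le> d") auto

lemma cesaro_ell_inf_embedding_le:
  assumes "0 < d" "a \<in> ell_inf" "0 < x"
  shows "cesaro (ell_inf_embedding d a) x \<le> ell_inf_norm a * min 1 (d / x)"
  using cesaro_le_of_bounded_support[OF ell_inf_embedding_measurable
      ell_inf_embedding_bound[of d a "ell_inf_norm a", OF assms(1) abs_le_ell_inf_norm[OF assms(2)]]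
      assms(3,1)] .

lemma cesaro_ell_inf_embedding_ge:
  assumes "0 < d" "a \<in> ell_inf" "knot d k / 2 < x" "x \<le> knot d k"
  shows "\<bar>a (fst (prod_decode k))\<bar> * (1 - 2 / (real k + 2)) \<le> cesaro (ell_inf_embedding d a) x"
proof -
  let ?c = "\<bar>a (fst (prod_decode k))\<bar>" and ?y = "knot d (Suc k)"
  have pos: "0 < knot d k" "0 < ?y" using knot_pos[OF assms(1)] by auto
  have "?y \<le> knot d k / 2"
    unfolding knot_Suc using pos by (intro divide_left_mono) auto
  then have y_less: "?y < x" using assms(3) by linarith
  have emb_ge: "?c \<le> \<bar>ell_inf_embedding d a t\<bar>" if "?y < t" "t < x" for t
  proof -
    have "t \<in> block d k" using that assms(4) unfolding block_def by simp
    then show ?thesis using ell_inf_embedding_on_block[OF assms(1)] by simp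
  qed
  have lower: "?c * (x - ?y) / x \<le> cesaro (ell_inf_embedding d a) x"
    by (rule cesaro_ge_of_lower_bound[OF ell_inf_embedding_measurable abs_ell_inf_embedding_le[OF assms(1,2)]])
       (use pos y_less emb_ge in auto)
  have "?y / x \<le> ?y / (knot d k / 2)"
    using pos assms(3) by (intro divide_left_mono) auto
  also have "\<dots> = 2 / (real k + 2)"
    using pos(1) add_nonneg_pos[of "real k * knot d k" "2 * knot d k"]
    by (simp add: knot_Suc field_simps)
  finally have "1 - 2 / (real k + 2) \<le> (x - ?y) / x"
    using y_less pos by (simp add: diff_divide_distrib)
  then have "?c * (1 - 2 / (real k + 2)) \<le> ?c * ((x - ?y) / x)"
    by (intro mult_left_mono) auto
  then show ?thesis using lower by simp
qed

lemma linf_norm_cesaro_ell_inf_embedding: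
  assumes "0 < d" "a \<in> ell_inf"
  shows "linf_norm (cesaro (ell_inf_embedding d a)) = ell_inf_norm a"
proof (rule linf_norm_eqI[OF ell_inf_norm_nonneg[OF assms(2)]])
  fix x :: real assume "0 < x"
  have "cesaro (ell_inf_embedding d a) x \<le> ell_inf_norm a * min 1 (d / x)"
    using cesaro_ell_inf_embedding_le[OF assms \<open>0 < x\<close>] .
  also have "\<dots> \<le> ell_inf_norm a"
    using ell_inf_norm_nonneg[OF assms(2)] by (intro mult_left_le) auto
  finally show "\<bar>cesaro (ell_inf_embedding d a) x\<bar> \<le> ell_inf_norm a"
    using cesaro_nonneg by simp
next
  fix M assume "M < ell_inf_norm a"
  then obtain n where n: "M < \<bar>a n\<bar>"
    unfolding ell_inf_norm_def using less_cSUP_iff[OF _ ell_inf_bdd_above[OF assms(2)]] by auto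
  obtain j :: nat where "2 * \<bar>a n\<bar> / (\<bar>a n\<bar> - M) < real j"
    using reals_Archimedean2 by blast
  \<comment> \<open>coordinate n sits on block k = prod_encode (n, j), which for large j almost fills (0, knot d k]\<close>
  define k where "k = prod_encode (n, j)"
  have "j \<le> k" unfolding k_def by (rule le_prod_encode_2)
  then have "real j * (\<bar>a n\<bar> - M) \<le> (real k + 2) * (\<bar>a n\<bar> - M)"
    using n by (intro mult_right_mono) auto
  moreover have "2 * \<bar>a n\<bar> < real j * (\<bar>a n\<bar> - M)"
    using \<open>2 * \<bar>a n\<bar> / (\<bar>a n\<bar> - M) < real j\<close> n by (simp add: divide_less_eq)
  ultimately have "2 * \<bar>a n\<bar> < (real k + 2) * (\<bar>a n\<bar> - M)"
    by linarith
  then have M_less: "M < \<bar>a n\<bar> * (1 - 2 / (real k + 2))"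
    by (simp add: field_simps)
  have "\<forall>x\<in>{knot d k / 2<..<knot d k}. M < \<bar>cesaro (ell_inf_embedding d a) x\<bar>"
  proof
    fix x assume "x \<in> {knot d k / 2<..<knot d k}"
    then have "\<bar>a n\<bar> * (1 - 2 / (real k + 2)) \<le> cesaro (ell_inf_embedding d a) x"
      using cesaro_ell_inf_embedding_ge[OF assms, of k x] by (auto simp: k_def)
    then show "M < \<bar>cesaro (ell_inf_embedding d a) x\<bar>" using M_less by simp
  qed
  then show "\<exists>l u. 0 \<le> l \<and> l < u \<and> (\<forall>x\<in>{l<..<u}. M < \<bar>cesaro (ell_inf_embedding d a) x\<bar>)"
    using knot_pos[OF assms(1), of k] by (intro exI[of _ "knot d k / 2"] exI[of _ "knot d k"]) auto
qed

lemma ell_inf_embedding_in_cesaro_set: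
  assumes X: "banach_ideal_space X NX" and "0 < d"
    and step: "(\<lambda>x. min 1 (d / x)) \<in> X" "NX (\<lambda>x. min 1 (d / x)) \<le> 1"
    and a: "a \<in> ell_inf"
  shows "ell_inf_embedding d a \<in> cesaro_set (inter_Linf_set X)"
    and "cesaro_norm (inter_Linf_norm NX) (ell_inf_embedding d a) = ell_inf_norm a"
proof -
  let ?s = "ell_inf_norm a" and ?C = "cesaro (ell_inf_embedding d a)"
  have s_nonneg: "0 \<le> ?s" by (rule ell_inf_norm_nonneg[OF a])
  have C_L0: "?C \<in> L0"
    by (intro borel_measurable_imp_L0 cesaro_measurable ell_inf_embedding_measurable)
  have C_le: "\<bar>?C x\<bar> \<le> \<bar>?s * min 1 (d / x)\<bar>" if "0 < x" for x
    using cesaro_ell_inf_embedding_le[OF \<open>0 < d\<close> a that] cesaro_nonneg by simp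
  have step_X: "(\<lambda>x. ?s * min 1 (d / x)) \<in> X"
    by (rule banach_ideal_space_mult[OF X step(1)])
  have C_X: "?C \<in> X"
    by (rule banach_ideal_space_dominated(1)[OF X C_L0 step_X C_le])
  have "NX ?C \<le> NX (\<lambda>x. ?s * min 1 (d / x))"
    by (rule banach_ideal_space_dominated(2)[OF X C_L0 step_X C_le])
  also have "\<dots> \<le> ?s"
    using banach_ideal_space_norm_mult[OF X step(1)] step(2) s_nonneg by (simp add: mult_left_le)
  finally have C_norm: "NX ?C \<le> ?s" .
  have "\<bar>?C x\<bar> \<le> ?s" if "0 < x" for x
    using C_le[OF that] mult_left_le[OF min.cobounded1 s_nonneg, of "d / x"] s_nonneg \<open>0 < d\<close> that
    by (simp add: abs_mult)
  then have C_Linf: "?C \<in> Linf"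
    unfolding Linf_def using C_L0 by (auto intro!: AE_M0I)
  show "ell_inf_embedding d a \<in> cesaro_set (inter_Linf_set X)"
    unfolding cesaro_set_def inter_Linf_set_def
    using borel_measurable_imp_L0[OF ell_inf_embedding_measurable] C_X C_Linf
      cesaro_defined_bounded[OF ell_inf_embedding_measurable abs_ell_inf_embedding_le[OF \<open>0 < d\<close> a]]
    by auto
  show "cesaro_norm (inter_Linf_norm NX) (ell_inf_embedding d a) = ?s"
    unfolding cesaro_norm_def inter_Linf_norm_def linf_norm_cesaro_ell_inf_embedding[OF \<open>0 < d\<close> a]
    using C_norm by simp
qed

lemma contains_lattice_isometric_ell_inf_of_small_cesaro_step:
  assumes "banach_ideal_space X NX" "0 < d"
    and "(\<lambda>x. min 1 (d / x)) \<in> X" "NX (\<lambda>x. min 1 (d / x)) \<le> 1"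
  shows "contains_lattice_isometric_ell_inf (cesaro_set (inter_Linf_set X)) (cesaro_norm (inter_Linf_norm NX))"
  unfolding contains_lattice_isometric_ell_inf_def ae_eq_def
proof (intro exI[of _ "ell_inf_embedding d"] conjI ballI allI AE_I2)
  fix a b :: "nat \<Rightarrow> real" and c t :: real
  show "ell_inf_embedding d (\<lambda>n. a n + b n) t = ell_inf_embedding d a t + ell_inf_embedding d b t"
    by (rule ell_inf_embedding_pointwise[OF \<open>0 < d\<close>, where \<phi> = "(+)"]) simp
  show "ell_inf_embedding d (\<lambda>n. c * a n) t = c * ell_inf_embedding d a t"
    by (rule ell_inf_embedding_pointwise[OF \<open>0 < d\<close>, where \<phi> = "\<lambda>x y. c * x" and b = a]) simp
  show "ell_inf_embedding d (\<lambda>n. max (a n) (b n)) t = max (ell_inf_embedding d a t) (ell_inf_embedding d b t)"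
    by (rule ell_inf_embedding_pointwise[OF \<open>0 < d\<close>, where \<phi> = max]) simp
qed (use ell_inf_embedding_in_cesaro_set[OF assms] in auto)

section \<open>Small Cesaro transforms of indicators\<close>

lemma cesaro_step_majorant_of_cesaro_set:
  assumes ri: "rearrangement_invariant X NX"
    and f: "f \<in> cesaro_set X" "\<not> ae_eq f (\<lambda>_. 0)"
  obtains x0 G where "0 < x0" "G \<in> X" "\<And>t. 0 < t \<Longrightarrow> min 1 (x0 / t) \<le> G t"
proof -
  have X: "banach_ideal_space X NX" by (rule rearrangement_invariant_banach_ideal_space[OF ri])
  have defined: "cesaro_defined f" and Cf_X: "cesaro f \<in> X"
    using f(1) unfolding cesaro_set_def by auto
  obtain x0 c where "0 < x0" "0 < c" and tail: "\<And>x. x0 \<le> x \<Longrightarrow> c / x \<le> cesaro f x"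
    using cesaro_tail_lower_bound[OF defined f(2)] by blast
  \<comment> \<open>Cf \<ge> c/x exhibits the indicator of [x0, 2 x0) in X, hence that of (0, x0) by rearrangement.\<close>
  have "indicator {x0..<2 * x0} \<in> X"
  proof (rule banach_ideal_space_dominated(1)[OF X _ banach_ideal_space_mult[OF X Cf_X, of "2 * x0 / c"]])
    show "indicator {x0..<2 * x0} \<in> L0"
      by (intro borel_measurable_imp_L0) measurable
    fix t :: real assume "0 < t"
    show "\<bar>indicator {x0..<2 * x0} t :: real\<bar> \<le> \<bar>2 * x0 / c * cesaro f t\<bar>"
    proof (cases "x0 \<le> t \<and> t < 2 * x0")
      case True
      have "c / (2 * x0) \<le> c / t"
        using True \<open>0 < c\<close> \<open>0 < x0\<close> by (intro divide_left_mono) auto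
      also have "\<dots> \<le> cesaro f t" using tail True by simp
      finally have "1 \<le> 2 * x0 / c * cesaro f t"
        using \<open>0 < c\<close> \<open>0 < x0\<close> by (simp add: field_simps)
      then have "1 \<le> \<bar>2 * x0 / c * cesaro f t\<bar>" by (rule order_trans[OF _ abs_ge_self])
      then show ?thesis using True by simp
    qed simp
  qed
  then have initial_X: "indicator {0<..<x0} \<in> X"
    by (rule rearrangement_invariant_indicator(1)[OF ri]) (use \<open>0 < x0\<close> in auto)
  define G where "G t = indicator {0<..<x0} t + x0 / c * cesaro f t" for t
  have "G \<in> X"
    unfolding G_def by (intro banach_ideal_space_add[OF X initial_X] banach_ideal_space_mult[OF X Cf_X])
  moreover have "min 1 (x0 / t) \<le> G t" if "0 < t" for t
  proof (cases "t < x0")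
    case True
    then show ?thesis
      unfolding G_def using that \<open>0 < c\<close> \<open>0 < x0\<close> cesaro_nonneg[of f t] by simp
  next
    case False
    then have "x0 / c * (c / t) \<le> x0 / c * cesaro f t"
      using tail \<open>0 < c\<close> \<open>0 < x0\<close> by (intro mult_left_mono) auto
    then show ?thesis
      unfolding G_def using False \<open>0 < c\<close> by (simp add: min_le_iff_disj)
  qed
  ultimately show ?thesis using that \<open>0 < x0\<close> by blast
qed

lemma small_cesaro_step_of_order_continuous_majorant:
  assumes X: "banach_ideal_space X NX" and G: "G \<in> order_continuous_part X NX"
    and "0 < x0" and dominates: "\<And>t. 0 < t \<Longrightarrow> min 1 (x0 / t) \<le> G t"
  obtains d where "0 < d" "(\<lambda>x. min 1 (d / x)) \<in> X" "NX (\<lambda>x. min 1 (d / x)) \<le> 1"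
proof -
  have G_X: "G \<in> X" using G unfolding order_continuous_part_def by blast
  define F where "F n t = min 1 (x0 / real (Suc n) / t)" for n t
  have F_L0: "F n \<in> L0" for n
    unfolding F_def by (intro borel_measurable_imp_L0) measurable
  have F_nonneg: "0 \<le> F n t" if "0 < t" for n t
    unfolding F_def using \<open>0 < x0\<close> that by simp
  have F_le_step: "F n t \<le> min 1 (x0 / t)" if "0 < t" for n t
    unfolding F_def using \<open>0 < x0\<close> that
    by (intro min.mono divide_right_mono) (auto simp: divide_le_eq)
  have F_le: "\<bar>F n t\<bar> \<le> \<bar>G t\<bar>" if "0 < t" for n t
    using F_nonneg[OF that, of n] F_le_step[OF that, of n] dominates[OF that] by (auto simp: abs_if)
  have "(\<lambda>n. NX (F n)) \<longlonglongrightarrow> 0"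
  proof (rule order_continuous_partD[OF G F_L0], rule AE_M0I, intro conjI allI)
    fix t :: real and n assume "0 < t"
    show "0 \<le> F n t" using F_nonneg[OF \<open>0 < t\<close>] .
    show "F n t \<le> \<bar>G t\<bar>" using F_le[OF \<open>0 < t\<close>, of n] by linarith
    show "F (Suc n) t \<le> F n t"
      unfolding F_def using \<open>0 < x0\<close> \<open>0 < t\<close>
      by (intro min.mono divide_right_mono divide_left_mono) auto
    have "(\<lambda>n. x0 / real (Suc n) / t) \<longlonglongrightarrow> 0 / t"
      by (intro tendsto_divide tendsto_const LIMSEQ_Suc[OF lim_const_over_n]) (use \<open>0 < t\<close> in simp)
    then have "(\<lambda>n. min 1 (x0 / real (Suc n) / t)) \<longlonglongrightarrow> min 1 (0 / t)"
      by (intro tendsto_min tendsto_const)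
    then show "(\<lambda>n. F n t) \<longlonglongrightarrow> 0" unfolding F_def by simp
  qed
  then have "eventually (\<lambda>n. NX (F n) < 1) sequentially"
    by (rule order_tendstoD) simp
  then obtain n where "NX (F n) < 1"
    by (auto simp: eventually_sequentially)
  moreover have "F n \<in> X"
    by (rule banach_ideal_space_dominated(1)[OF X F_L0 G_X F_le])
  ultimately show ?thesis
    using that[of "x0 / real (Suc n)"] \<open>0 < x0\<close> unfolding F_def by (simp add: fun_eq_iff)
qed

lemma order_continuous_small_initial_indicator:
  assumes ri: "rearrangement_invariant X NX"
    and f: "f \<in> order_continuous_part X NX" "\<not> ae_eq f (\<lambda>_. 0)" and "0 < \<epsilon>"
  shows "\<exists>d>0. indicator {0<..<d} \<in> X \<and> NX (indicator {0<..<d}) < \<epsilon>"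
proof -
  have X: "banach_ideal_space X NX" by (rule rearrangement_invariant_banach_ideal_space[OF ri])
  have "f \<in> L0"
    using f(1) banach_ideal_space_subset_L0[OF X] unfolding order_continuous_part_def by blast
  then obtain e R where "0 < e" and E_pos: "0 < emeasure lborel {t. 0 < t \<and> t < R \<and> e < \<bar>f t\<bar>}"
    using positive_level_set_of_not_ae_zero[OF _ f(2)] by blast
  define E where "E = {t. 0 < t \<and> t < R \<and> e < \<bar>f t\<bar>}"
  have E_sets: "E \<in> sets borel" unfolding E_def by (rule L0_level_set_borel[OF \<open>f \<in> L0\<close>])
  have "bounded E" unfolding E_def bounded_real by (auto intro!: exI[of _ R])
  have E_fin: "E \<in> fmeasurable lborel" by (rule fmeasurable_bounded_borel[OF E_sets \<open>bounded E\<close>])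
  have "0 < measure lborel E"
    using E_pos emeasure_eq_measure2[OF E_fin] unfolding E_def[symmetric] by simp
  then obtain S where S_sets: "\<And>n. S n \<in> sets borel" and S_sub: "\<And>n. S n \<subseteq> E"
    and S_decreasing: "\<And>n. S (Suc n) \<subseteq> S n" and S_pos: "\<And>n. 0 < measure lborel (S n)"
    and S_null: "(\<Inter>n. S n) \<in> null_sets lborel"
    using shrinking_subsets_of_positive_measure[OF E_sets \<open>bounded E\<close>] by blast
  have S_level: "S n \<subseteq> {t. e < \<bar>f t\<bar>}" and S_positive: "S n \<subseteq> {0<..}" for n
    using S_sub[of n] by (auto simp: E_def)
  note shrinking = order_continuous_shrinking_indicators[OF X f(1) \<open>0 < e\<close> S_sets S_level
      S_decreasing S_null]
  obtain n where small: "NX (indicator (S n)) < \<epsilon>"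
    using order_tendstoD(2)[OF shrinking(2) \<open>0 < \<epsilon>\<close>] by (auto simp: eventually_sequentially)
  define d where "d = measure lborel (S n)"
  have same_measure: "emeasure lborel (S n) = emeasure lborel {0<..<d}"
    using fmeasurableI2[OF E_fin S_sub[of n]] S_sets[of n] S_pos[of n]
    by (simp add: d_def emeasure_eq_measure2)
  have "{0<..<d} \<in> sets borel" "{0<..<d} \<subseteq> {0<..}" by auto
  then have "indicator {0<..<d} \<in> X" "NX (indicator {0<..<d}) = NX (indicator (S n))"
    using rearrangement_invariant_indicator[OF ri shrinking(1) _ S_positive _ same_measure] by blast+
  then show ?thesis using S_pos[of n] small by (auto simp: d_def)
qed

lemma small_cesaro_step_of_cesaro_bounded:
  assumes X: "banach_ideal_space X NX" and "cesaro_bounded_on X NX"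
    and small: "\<And>\<epsilon>. 0 < \<epsilon> \<Longrightarrow> \<exists>d>0. indicator {0<..<d} \<in> X \<and> NX (indicator {0<..<d}) < \<epsilon>"
  obtains d where "0 < d" "(\<lambda>x. min 1 (d / x)) \<in> X" "NX (\<lambda>x. min 1 (d / x)) \<le> 1"
proof -
  obtain K where K: "\<And>f. f \<in> X \<Longrightarrow> cesaro f \<in> X \<and> NX (cesaro f) \<le> K * NX f"
    using assms(2) unfolding cesaro_bounded_on_def by blast
  have "0 < 1 / (\<bar>K\<bar> + 1)" by (simp add: add_nonneg_pos)
  then obtain d where "0 < d" and ind_X: "indicator {0<..<d} \<in> X"
    and ind_small: "NX (indicator {0<..<d}) < 1 / (\<bar>K\<bar> + 1)"
    using small by blast
  have C_X: "cesaro (indicator {0<..<d}) \<in> X" using K[OF ind_X] by blast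
  have step_L0: "(\<lambda>x. min 1 (d / x)) \<in> L0"
    by (intro borel_measurable_imp_L0) measurable
  have step_le: "\<bar>min 1 (d / x)\<bar> \<le> \<bar>cesaro (indicator {0<..<d}) x\<bar>" if "0 < x" for x
    using min_le_cesaro_indicator[OF \<open>0 < d\<close> that] \<open>0 < d\<close> that by simp
  have "NX (\<lambda>x. min 1 (d / x)) \<le> NX (cesaro (indicator {0<..<d}))"
    by (rule banach_ideal_space_dominated(2)[OF X step_L0 C_X step_le])
  also have "\<dots> \<le> K * NX (indicator {0<..<d})" using K[OF ind_X] by blast
  also have "\<dots> \<le> \<bar>K\<bar> * NX (indicator {0<..<d})"
    using banach_ideal_space_norm_nonneg[OF X ind_X] by (intro mult_right_mono) auto
  also have "\<dots> \<le> \<bar>K\<bar> * (1 / (\<bar>K\<bar> + 1))"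
    using ind_small by (intro mult_left_mono) auto
  also have "\<dots> < 1" by (simp add: field_simps)
  finally show ?thesis
    using that \<open>0 < d\<close> banach_ideal_space_dominated(1)[OF X step_L0 C_X step_le] by simp
qed

theorem corollary4p8:
  fixes X :: "(real \<Rightarrow> real) set" and NX :: "(real \<Rightarrow> real) \<Rightarrow> real"
  assumes ri: "rearrangement_invariant X NX"
    and fatou: "fatou_property X NX"
    and CX_nontrivial: "\<exists>f\<in>cesaro_set X. \<not> ae_eq f (\<lambda>_. 0)"
    and alt: "((\<exists>f\<in>order_continuous_part X NX. \<not> ae_eq f (\<lambda>_. 0)) \<and> cesaro_bounded_on X NX)
              \<or> order_continuous_part X NX = X"
  shows "contains_lattice_isometric_ell_inf
           (cesaro_set (inter_Linf_set X)) (cesaro_norm (inter_Linf_norm NX))"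
proof -
  have X: "banach_ideal_space X NX" by (rule rearrangement_invariant_banach_ideal_space[OF ri])
  obtain d where "0 < d" "(\<lambda>x. min 1 (d / x)) \<in> X" "NX (\<lambda>x. min 1 (d / x)) \<le> 1"
    using alt
  proof
    assume "(\<exists>f\<in>order_continuous_part X NX. \<not> ae_eq f (\<lambda>_. 0)) \<and> cesaro_bounded_on X NX"
    then obtain f where f: "f \<in> order_continuous_part X NX" "\<not> ae_eq f (\<lambda>_. 0)"
      and bounded: "cesaro_bounded_on X NX" by blast
    have "\<exists>d>0. indicator {0<..<d} \<in> X \<and> NX (indicator {0<..<d}) < \<epsilon>" if "0 < \<epsilon>" for \<epsilon>
      by (rule order_continuous_small_initial_indicator[OF ri f that])
    then show thesis
      by (rule small_cesaro_step_of_cesaro_bounded[OF X bounded _ that])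
  next
    assume order_continuous: "order_continuous_part X NX = X"
    obtain f where "f \<in> cesaro_set X" "\<not> ae_eq f (\<lambda>_. 0)" using CX_nontrivial by blast
    then obtain x0 G where "0 < x0" "G \<in> X" "\<And>t. 0 < t \<Longrightarrow> min 1 (x0 / t) \<le> G t"
      using cesaro_step_majorant_of_cesaro_set[OF ri] by blast
    then show thesis
      using small_cesaro_step_of_order_continuous_majorant[OF X] that order_continuous by metis
  qed
  then show ?thesis by (rule contains_lattice_isometric_ell_inf_of_small_cesaro_step[OF X])
qed

end
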